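(* Let $G$ and $H$ be locally compact abelian groups with $H$ torsion-free, and let $f:G\to H$ be a continuous homomorphism. Then $f(G_{op})\subseteq H_{op}$.
   Context: A subgroup $H$ of an abelian group $G$ is pure if $nH=H\cap nG$ for every positive integer $n$. For an LCA group $G$, $G_{op}$ denotes the intersection of all open pure subgroups of $G$. *)

theory Defs
  imports "HOL-Analysis.Analysis"
begin

fun nmul :: "nat \<Rightarrow> 'a::monoid_add \<Rightarrow> 'a" where
  "nmul 0 x = 0"
| "nmul (Suc n) x = x + nmul n x"

definition is_add_subgroup :: "'a::group_add set \<Rightarrow> bool" where
  "is_add_subgroup H \<longleftrightarrow> 0 \<in> H \<and> (\<forall>x\<in>H. \<forall>y\<in>H. x + y \<in> H) \<and> (\<forall>x\<in>H. - x \<in> H)"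

definition pure_subgroup :: "'a::ab_group_add set \<Rightarrow> bool" where
  "pure_subgroup H \<longleftrightarrow> is_add_subgroup H \<and>
     (\<forall>n>0. nmul n ` H = H \<inter> nmul n ` (UNIV :: 'a set))"

definition G_op :: "'a::{ab_group_add, topological_space} set" where
  "G_op = \<Inter> {H. open H \<and> pure_subgroup H}"

definition torsion_free :: "'a::ab_group_add itself \<Rightarrow> bool" where
  "torsion_free _ \<longleftrightarrow> (\<forall>(x::'a) n. n > 0 \<and> nmul n x = 0 \<longrightarrow> x = 0)"

definition LCA :: "'a::{topological_ab_group_add, t2_space} itself \<Rightarrow> bool" where
  "LCA _ \<longleftrightarrow> locally_compact_space (euclidean :: 'a topology)"

end

theory Submission
  imports Defs
begin

text \<open>A continuous homomorphism pulls open subgroups back to open subgroups. Purity also pulls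
  back when the target is torsion-free: if \<open>f z = n k\<close> with \<open>k \<in> K\<close> and \<open>z = n y\<close>, then
  \<open>n (f y - k) = 0\<close>, so \<open>f y = k\<close> and \<open>y \<in> f -` K\<close>. Hence every open pure subgroup of \<open>H\<close> has
  an open pure preimage containing \<open>G_op\<close>, which gives \<open>f ` G_op \<subseteq> H_op\<close>.\<close>

lemma additive_nmul: "Modules.additive (nmul n :: 'a::ab_group_add \<Rightarrow> 'a)"
proof
  show "nmul n (x + y) = nmul n x + nmul n y" for x y :: 'a
    by (induction n) (simp_all add: algebra_simps)
qed

lemma (in Modules.additive) nmul: "f (nmul n x) = nmul n (f x)"
  by (induction n) (simp_all add: add zero)

lemma nmul_closed: "is_add_subgroup H \<Longrightarrow> x \<in> H \<Longrightarrow> nmul n x \<in> H"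
  by (induction n) (auto simp: is_add_subgroup_def)

lemma torsion_free_nmul_cancel:
  fixes a b :: "'a::ab_group_add"
  assumes "torsion_free TYPE('a)" and "n > 0" and "nmul n a = nmul n b"
  shows "a = b"
proof -
  have "nmul n (a - b) = 0"
    using assms(3) by (simp add: Modules.additive.diff[OF additive_nmul])
  then show ?thesis
    using assms(1,2) unfolding torsion_free_def by auto
qed

lemma (in Modules.additive) is_add_subgroup_vimage:
  "is_add_subgroup K \<Longrightarrow> is_add_subgroup (f -` K)"
  by (auto simp: is_add_subgroup_def add zero minus)

lemma (in Modules.additive) pure_subgroup_vimage:
  assumes "torsion_free TYPE('b)" and "pure_subgroup K"
  shows "pure_subgroup (f -` K)"
proof -
  have sub: "is_add_subgroup (f -` K)"
    using assms(2) is_add_subgroup_vimage by (simp add: pure_subgroup_def)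
  have "f -` K \<inter> range (nmul n) \<subseteq> nmul n ` (f -` K)" if "n > 0" for n
  proof
    fix z assume "z \<in> f -` K \<inter> range (nmul n)"
    then obtain y where z: "z = nmul n y" and "f z \<in> K" by auto
    then have "f z \<in> K \<inter> range (nmul n)" by (auto simp: nmul)
    with assms(2) \<open>n > 0\<close> obtain k where "k \<in> K" "f z = nmul n k"
      unfolding pure_subgroup_def by blast
    then have "f y = k"
      using torsion_free_nmul_cancel[OF assms(1) \<open>n > 0\<close>] z by (simp add: nmul)
    with z \<open>k \<in> K\<close> show "z \<in> nmul n ` (f -` K)" by auto
  qed
  moreover have "nmul n ` (f -` K) \<subseteq> f -` K \<inter> range (nmul n)" for n
    using nmul_closed[OF sub] by auto
  ultimately show ?thesis
    using sub unfolding pure_subgroup_def by blast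
qed

theorem lemma8:
  fixes f :: "'a::{topological_ab_group_add, t2_space} \<Rightarrow> 'b::{topological_ab_group_add, t2_space}"
  assumes "LCA TYPE('a)"
    and "LCA TYPE('b)"
    and "torsion_free TYPE('b)"
    and "continuous_on UNIV f"
    and "\<And>x y. f (x + y) = f x + f y"
  shows "f ` (G_op :: 'a set) \<subseteq> (G_op :: 'b set)"
proof -
  interpret Modules.additive f by unfold_locales (rule assms(5))
  have "G_op \<subseteq> f -` K" if "open K" "pure_subgroup K" for K :: "'b set"
  proof -
    have "open (f -` K)"
      using continuous_on_open_vimage[OF open_UNIV] assms(4) \<open>open K\<close> by auto
    moreover have "pure_subgroup (f -` K)"
      using pure_subgroup_vimage[OF assms(3) \<open>pure_subgroup K\<close>] .
    ultimately show ?thesis unfolding G_op_def by blast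
  qed
  then show ?thesis unfolding G_op_def by blast
qed

end
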